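(* Consider (1+1) GP-single applied to MO-ORDER, and (1+1) GP-single applied to MO-MAJORITY, each started with the empty tree as initial solution. In both cases the expected optimization time is $\Omega(n\log n)$.
   Context: Fix an integer $n\ge 1$ and real weights $w_1\ge w_2\ge\dots\ge w_n>0$. The terminal set is $T=\{x_1,\bar x_1,\dots,x_n,\bar x_n\}$ ($\bar x_i$ is the complement of $x_i$; $x_i$ is called positive). A syntax tree is either the empty tree or a rooted ordered binary tree whose inner nodes are all labelled by the binary function $J$ (join, exactly two ordered children) and whose leaves are labelled by elements of $T$. The complexity $C(X)$ is the number of nodes of $X$ (0 for the empty tree). The leaf list $l$ of $X$ is the sequence of leaf labels in an inorder traversal. WORDER: build a list $S$ by scanning $l$ from front to rear and appending a literal only if neither it nor its complement is already in $S$; WORDER$(X)=\sum_{i:\,x_i\in S} w_i$. WMAJORITY: WMAJORITY$(X)=\sum w_i$ over all $i$ such that $x_i$ occurs in $l$ at least once and at least as often as $\bar x_i$. ORDER and MAJORITY are WORDER and WMAJORITY with all $w_i=1$. For $F$ one of these, MO-$F(X)=(F(X),C(X))$ (MO-ORDER, MO-MAJORITY, MO-WORDER, MO-WMAJORITY), where $F$ is to be maximized and $C$ minimized. Mutation (HVL-Prime applied $k$ times): each application chooses uniformly at random one of three operations. Substitute: replace a uniformly random leaf by a uniformly random $u\in T$. Insert: choose a uniformly random node $v$ and uniformly random $u\in T$, replace $v$ by a $J$-node with children $u$ and $v$ in uniformly random order (inserting into the empty tree yields the single leaf $u$). Delete: choose a uniformly random leaf $v$ with parent $p$ and sibling $u$,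 replace $p$ by $u$ (deleting $p$ and $v$; deleting the only leaf of a one-leaf tree yields the empty tree). Single-operation mutation uses $k=1$. (1+1) GP-single on MO-$F$: start with an initial tree $X$; in each iteration let $Y$ be $X$ mutated with $k=1$, and set $X:=Y$ iff $F(Y)>F(X)$, or $F(Y)=F(X)$ and $C(Y)\le C(X)$. Expected optimization time: expected number of iterations (fitness evaluations) until the current solution is for the first time optimal, i.e. has maximum possible $F$-value and, among such trees, minimum complexity. *)

theory Defs
  imports "HOL-Probability.Probability"
begin

text \<open>Literals: Pos i is x_i, Neg i is its complement. Variables are indexed 1..n.\<close>
datatype lit = Pos nat | Neg nat

fun compl :: "lit \<Rightarrow> lit" where
  "compl (Pos i) = Neg i"
| "compl (Neg i) = Pos i"

definition lits :: "nat \<Rightarrow> lit set" where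
  "lits n = Pos ` {1..n} \<union> Neg ` {1..n}"

text \<open>Nonempty syntax trees: leaves labelled by literals, inner nodes are J with two
  ordered children. The empty tree is represented by None (type tree option).\<close>
datatype tree = Lf lit | J tree tree

fun nleaves :: "tree \<Rightarrow> nat" where
  "nleaves (Lf a) = 1"
| "nleaves (J l r) = nleaves l + nleaves r"

fun nnodes :: "tree \<Rightarrow> nat" where
  "nnodes (Lf a) = 1"
| "nnodes (J l r) = 1 + nnodes l + nnodes r"

definition cplx :: "tree option \<Rightarrow> nat" where
  "cplx X = (case X of None \<Rightarrow> 0 | Some t \<Rightarrow> nnodes t)"

fun leaves :: "tree \<Rightarrow> lit list" where
  "leaves (Lf a) = [a]"
| "leaves (J l r) = leaves l @ leaves r"

definition leaflist :: "tree option \<Rightarrow> lit list" where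
  "leaflist X = (case X of None \<Rightarrow> [] | Some t \<Rightarrow> leaves t)"

text \<open>The list S of WORDER: scan from front to rear, append a literal only if
  neither it nor its complement is already in S.\<close>
fun order_scan :: "lit list \<Rightarrow> lit list \<Rightarrow> lit list" where
  "order_scan S [] = S"
| "order_scan S (a # l) =
     order_scan (if a \<in> set S \<or> compl a \<in> set S then S else S @ [a]) l"

definition worder :: "(nat \<Rightarrow> real) \<Rightarrow> nat \<Rightarrow> tree option \<Rightarrow> real" where
  "worder w n X = (\<Sum>i\<in>{1..n}. if Pos i \<in> set (order_scan [] (leaflist X)) then w i else 0)"

definition wmajority :: "(nat \<Rightarrow> real) \<Rightarrow> nat \<Rightarrow> tree option \<Rightarrow> real" where
  "wmajority w n X = (\<Sum>i\<in>{1..n}.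
     if count_list (leaflist X) (Pos i) \<ge> 1 \<and>
        count_list (leaflist X) (Pos i) \<ge> count_list (leaflist X) (Neg i)
     then w i else 0)"

definition ORDER :: "nat \<Rightarrow> tree option \<Rightarrow> real" where
  "ORDER n = worder (\<lambda>_. 1) n"

definition MAJORITY :: "nat \<Rightarrow> tree option \<Rightarrow> real" where
  "MAJORITY n = wmajority (\<lambda>_. 1) n"

text \<open>Replace the i-th leaf (inorder, 0-based) by u.\<close>
fun subst_leaf :: "nat \<Rightarrow> lit \<Rightarrow> tree \<Rightarrow> tree" where
  "subst_leaf i u (Lf a) = Lf u"
| "subst_leaf i u (J l r) =
     (if i < nleaves l then J (subst_leaf i u l) r
      else J l (subst_leaf (i - nleaves l) u r))"

text \<open>Insert at the i-th node (preorder, 0-based): the node v is replaced by a J-node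
  with children u and v; if b then u is the left child, otherwise the right child.\<close>
fun insert_at :: "nat \<Rightarrow> lit \<Rightarrow> bool \<Rightarrow> tree \<Rightarrow> tree" where
  "insert_at i u b (Lf a) = (if b then J (Lf u) (Lf a) else J (Lf a) (Lf u))"
| "insert_at i u b (J l r) =
     (if i = 0 then (if b then J (Lf u) (J l r) else J (J l r) (Lf u))
      else if i \<le> nnodes l then J (insert_at (i - 1) u b l) r
      else J l (insert_at (i - 1 - nnodes l) u b r))"

text \<open>Delete the i-th leaf (inorder, 0-based): its parent is replaced by its sibling;
  deleting the only leaf of a one-leaf tree yields the empty tree (None).\<close>
fun delete_leaf :: "nat \<Rightarrow> tree \<Rightarrow> tree option" where
  "delete_leaf i (Lf a) = None"
| "delete_leaf i (J l r) =
     (if i < nleaves l then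
        (case delete_leaf i l of None \<Rightarrow> Some r | Some l' \<Rightarrow> Some (J l' r))
      else
        (case delete_leaf (i - nleaves l) r of None \<Rightarrow> Some l | Some r' \<Rightarrow> Some (J l r')))"

text \<open>One application of HVL-Prime (k = 1). Substitute and delete on the empty tree
  (which has no leaf) leave it unchanged.\<close>
definition substitute :: "nat \<Rightarrow> tree option \<Rightarrow> tree option pmf" where
  "substitute n X = (case X of
      None \<Rightarrow> return_pmf None
    | Some t \<Rightarrow> do { i \<leftarrow> pmf_of_set {..<nleaves t}; u \<leftarrow> pmf_of_set (lits n);
                    return_pmf (Some (subst_leaf i u t)) })"

definition insertion :: "nat \<Rightarrow> tree option \<Rightarrow> tree option pmf" where
  "insertion n X = (case X of
      None \<Rightarrow> do { u \<leftarrow> pmf_of_set (lits n); return_pmf (Some (Lf u)) }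
    | Some t \<Rightarrow> do { i \<leftarrow> pmf_of_set {..<nnodes t}; u \<leftarrow> pmf_of_set (lits n);
                    b \<leftarrow> pmf_of_set (UNIV :: bool set);
                    return_pmf (Some (insert_at i u b t)) })"

definition deletion :: "tree option \<Rightarrow> tree option pmf" where
  "deletion X = (case X of
      None \<Rightarrow> return_pmf None
    | Some t \<Rightarrow> do { i \<leftarrow> pmf_of_set {..<nleaves t}; return_pmf (delete_leaf i t) })"

definition hvl_prime :: "nat \<Rightarrow> tree option \<Rightarrow> tree option pmf" where
  "hvl_prime n X = do {
     op \<leftarrow> pmf_of_set {0, 1, 2 :: nat};
     (if op = 0 then substitute n X else if op = 1 then insertion n X else deletion X) }"

definition gp_step :: "nat \<Rightarrow> (tree option \<Rightarrow> real) \<Rightarrow> tree option \<Rightarrow> tree option pmf" where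
  "gp_step n F X = map_pmf
     (\<lambda>Y. if F Y > F X \<or> (F Y = F X \<and> cplx Y \<le> cplx X) then Y else X) (hvl_prime n X)"

fun traj :: "('a \<Rightarrow> 'a pmf) \<Rightarrow> 'a \<Rightarrow> nat \<Rightarrow> 'a list pmf" where
  "traj K x0 0 = return_pmf [x0]"
| "traj K x0 (Suc t) = do { xs \<leftarrow> traj K x0 t; y \<leftarrow> K (last xs); return_pmf (xs @ [y]) }"

definition valid_tree :: "nat \<Rightarrow> tree option \<Rightarrow> bool" where
  "valid_tree n X \<longleftrightarrow> set (leaflist X) \<subseteq> lits n"

definition optimal :: "nat \<Rightarrow> (tree option \<Rightarrow> real) \<Rightarrow> tree option \<Rightarrow> bool" where
  "optimal n F X \<longleftrightarrow>
     (\<forall>Y. valid_tree n Y \<longrightarrow> F Y \<le> F X) \<and>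
     (\<forall>Y. valid_tree n Y \<longrightarrow> F Y = F X \<longrightarrow> cplx X \<le> cplx Y)"

text \<open>Expected optimization time: expectation of the (possibly infinite) first time T
  at which X_T is optimal, written as E[T] = sum over t of Pr[T > t], where
  T > t iff none of X_0, ..., X_t is optimal.\<close>
definition expected_opt_time :: "nat \<Rightarrow> (tree option \<Rightarrow> real) \<Rightarrow> tree option \<Rightarrow> ennreal" where
  "expected_opt_time n F X0 =
     (\<Sum>t. ennreal (measure_pmf.prob (traj (gp_step n F) X0 t)
                       {xs. \<forall>x\<in>set xs. \<not> optimal n F x}))"

end

theory Submission imports Defs "HOL-Analysis.Harmonic_Numbers" begin

(* 1. A general additive drift lower bound: if a bounded potential G >= 0 vanishes on
      optimal states and decreases in expectation by at most 1 per step of a Markov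
      kernel K, then the expected hitting time of the optimal states is at least G(x0).
   2. For trees, let k be the number of positive literals x_i occurring in the tree and
      take the potential 2n H(n - k) (H the harmonic numbers).  A single HVL-Prime
      operation introduces at most one new literal u into the leaf list; k grows only if
      u is one of the n - k missing positive literals, which happens with probability
      (n - k)/(2n), and then the potential drops by 2n/(n - k).  Selection either takes
      the offspring or keeps the current tree, so the expected decrease is <= 1.
   3. ORDER and MAJORITY are both bounded by k and reach n on the tree x_1 ... x_n, so an
      optimal tree has k = n, i.e. potential 0, while the empty tree has potential
      2n H(n) >= n ln n. *)

section \<open>An additive drift lower bound for Markov chains\<close>

text \<open>A series bounded below by its partial sums up to any t plus a multiple of its t-th
  term is bounded below by the same constant, because the terms of a convergent series
  tend to 0.\<close>
lemma suminf_lower_bound_from_partial_sums: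
  fixes p :: "nat \<Rightarrow> real"
  assumes p: "\<And>s. 0 \<le> p s" and c: "0 \<le> c"
    and partial: "\<And>t. ennreal a \<le> (\<Sum>s<t. ennreal (p s)) + ennreal c * ennreal (p t)"
  shows "ennreal a \<le> (\<Sum>s. ennreal (p s))"
proof (cases "(\<Sum>s. ennreal (p s)) = top")
  case False
  have sm: "summable p" using summable_suminf_not_top[OF p False] .
  have "a \<le> suminf p + c * p t" for t
  proof -
    have "ennreal a \<le> ennreal (sum p {..<t} + c * p t)"
      using partial[of t] p c
      by (simp add: sum_ennreal ennreal_mult'[symmetric] ennreal_plus[symmetric] sum_nonneg
               del: ennreal_plus)
    then have "a \<le> sum p {..<t} + c * p t"
      using p c by (subst (asm) ennreal_le_iff) (auto intro!: add_nonneg_nonneg sum_nonneg)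
    moreover have "sum p {..<t} \<le> suminf p" using sm p by (intro sum_le_suminf) auto
    ultimately show ?thesis by linarith
  qed
  moreover have "(\<lambda>t. suminf p + c * p t) \<longlonglongrightarrow> suminf p + c * 0"
    by (intro tendsto_intros summable_LIMSEQ_zero sm)
  ultimately have "a \<le> suminf p" by (intro LIMSEQ_le_const) auto
  then show ?thesis using suminf_ennreal[OF p False] by (simp add: ennreal_leI)
qed simp

text \<open>Telescoping the drift condition along the trajectory: the potential of the start
  is at most the probabilities of not having hit an optimum before time t plus the
  expected potential at time t on the event of not having hit one.\<close>
lemma drift_telescoping:
  fixes K :: "'a \<Rightarrow> 'a pmf" and G :: "'a \<Rightarrow> real"
  assumes G_nonneg: "\<And>x. 0 \<le> G x" and G_opt: "\<And>x. Opt x \<Longrightarrow> G x = 0"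
    and drift: "\<And>x. ennreal (G x) \<le> (\<integral>\<^sup>+y. ennreal (G y) \<partial>K x) + 1"
  defines "E \<equiv> {xs. \<forall>x\<in>set xs. \<not> Opt x}"
  shows "ennreal (G x0) \<le> (\<Sum>s<t. ennreal (measure_pmf.prob (traj K x0 s) E))
           + (\<integral>\<^sup>+xs. indicator E xs * ennreal (G (last xs)) \<partial>traj K x0 t)"
proof (induction t)
  case 0
  show ?case using G_opt by (cases "Opt x0") (auto simp: E_def)
next
  case (Suc t)
  let ?I = "\<lambda>xs. indicator E xs :: ennreal"
  let ?next = "\<lambda>xs. \<integral>\<^sup>+y. ennreal (G y) \<partial>K (last xs)"
  have extend: "?I (xs @ [y]) * ennreal (G y) = ?I xs * ennreal (G y)" for xs y
    using G_opt by (cases "Opt y") (auto simp: E_def indicator_def)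
  have step: "(\<integral>\<^sup>+xs. ?I xs * ennreal (G (last xs)) \<partial>traj K x0 (Suc t))
      = (\<integral>\<^sup>+xs. ?I xs * ?next xs \<partial>traj K x0 t)"
    by (simp add: extend nn_integral_cmult)
  have "(\<integral>\<^sup>+xs. ?I xs * ennreal (G (last xs)) \<partial>traj K x0 t)
      \<le> (\<integral>\<^sup>+xs. ?I xs * ?next xs + ?I xs \<partial>traj K x0 t)"
  proof (intro nn_integral_mono)
    fix xs
    have "?I xs * ennreal (G (last xs)) \<le> ?I xs * (?next xs + 1)"
      by (intro mult_left_mono drift) auto
    then show "?I xs * ennreal (G (last xs)) \<le> ?I xs * ?next xs + ?I xs"
      by (simp add: distrib_left)
  qed
  also have "\<dots> = (\<integral>\<^sup>+xs. ?I xs * ?next xs \<partial>traj K x0 t)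
                 + ennreal (measure_pmf.prob (traj K x0 t) E)"
    by (subst nn_integral_add) (auto simp: measure_pmf.emeasure_eq_measure)
  finally have decrease: "(\<integral>\<^sup>+xs. ?I xs * ennreal (G (last xs)) \<partial>traj K x0 t)
      \<le> (\<integral>\<^sup>+xs. ?I xs * ennreal (G (last xs)) \<partial>traj K x0 (Suc t))
         + ennreal (measure_pmf.prob (traj K x0 t) E)"
    unfolding step .
  show ?case
    using order.trans[OF Suc add_left_mono[OF decrease]] by (simp add: add_ac)
qed

lemma additive_drift_lower_bound:
  fixes K :: "'a \<Rightarrow> 'a pmf" and G :: "'a \<Rightarrow> real"
  assumes G_nonneg: "\<And>x. 0 \<le> G x" and G_opt: "\<And>x. Opt x \<Longrightarrow> G x = 0"
    and G_bounded: "\<And>x. G x \<le> M"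
    and drift: "\<And>x. ennreal (G x) \<le> (\<integral>\<^sup>+y. ennreal (G y) \<partial>K x) + 1"
  shows "ennreal (G x0)
           \<le> (\<Sum>t. ennreal (measure_pmf.prob (traj K x0 t) {xs. \<forall>x\<in>set xs. \<not> Opt x}))"
proof (rule suminf_lower_bound_from_partial_sums[where c = M])
  let ?E = "{xs. \<forall>x\<in>set xs. \<not> Opt x}"
  fix t
  have "(\<integral>\<^sup>+xs. indicator ?E xs * ennreal (G (last xs)) \<partial>traj K x0 t)
        \<le> (\<integral>\<^sup>+xs. ennreal M * indicator ?E xs \<partial>traj K x0 t)"
    using G_bounded by (intro nn_integral_mono) (auto simp: indicator_def intro!: ennreal_leI)
  also have "\<dots> = ennreal M * ennreal (measure_pmf.prob (traj K x0 t) ?E)"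
    by (simp add: nn_integral_cmult measure_pmf.emeasure_eq_measure)
  finally show "ennreal (G x0) \<le> (\<Sum>s<t. ennreal (measure_pmf.prob (traj K x0 s) ?E))
                  + ennreal M * ennreal (measure_pmf.prob (traj K x0 t) ?E)"
    using order.trans[OF drift_telescoping[of G Opt K x0 t, OF G_nonneg G_opt drift]
                         add_left_mono] by blast
qed (auto intro: order.trans[OF G_nonneg G_bounded])

lemma set_leaves_subst_leaf: "set (leaves (subst_leaf i u t)) \<subseteq> set (leaves t) \<union> {u}"
  by (induction i u t rule: subst_leaf.induct) auto

lemma set_leaves_insert_at: "set (leaves (insert_at i u b t)) \<subseteq> set (leaves t) \<union> {u}"
  by (induction i u b t rule: insert_at.induct) auto

lemma set_leaves_delete_leaf:
  "delete_leaf i t = Some t' \<Longrightarrow> set (leaves t') \<subseteq> set (leaves t)"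
  by (induction i t arbitrary: t' rule: delete_leaf.induct)
     (auto split: if_splits option.splits)

lemma set_leaflist_delete_leaf:
  "set (leaflist (delete_leaf i t)) \<subseteq> set (leaflist (Some t))"
  using set_leaves_delete_leaf[of i t] by (cases "delete_leaf i t") (auto simp: leaflist_def)

section \<open>The potential\<close>

definition covered :: "nat \<Rightarrow> tree option \<Rightarrow> nat set" where
  "covered n X = {i\<in>{1..n}. Pos i \<in> set (leaflist X)}"

definition num_covered :: "nat \<Rightarrow> tree option \<Rightarrow> nat" where
  "num_covered n X = card (covered n X)"

definition missing :: "nat \<Rightarrow> tree option \<Rightarrow> lit set" where
  "missing n X = Pos ` ({1..n} - covered n X)"

definition level :: "nat \<Rightarrow> nat \<Rightarrow> real" where
  "level n k = 2 * real n * harm (n - k)"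

definition potential :: "nat \<Rightarrow> tree option \<Rightarrow> real" where
  "potential n X = level n (num_covered n X)"

definition jump :: "nat \<Rightarrow> tree option \<Rightarrow> real" where
  "jump n X = (if num_covered n X < n then 2 * real n / real (n - num_covered n X) else 0)"

lemma covered_subset: "covered n X \<subseteq> {1..n}"
  by (auto simp: covered_def)

lemma finite_covered: "finite (covered n X)"
  using covered_subset finite_subset by blast

lemma num_covered_le: "num_covered n X \<le> n"
  using card_mono[OF finite_atLeastAtMost covered_subset] by (simp add: num_covered_def)

lemma card_missing: "card (missing n X) = n - num_covered n X"
proof -
  have "card (missing n X) = card ({1..n} - covered n X)"
    unfolding missing_def by (simp add: card_image inj_on_def)
  also have "\<dots> = n - num_covered n X"
    by (subst card_Diff_subset[OF finite_covered covered_subset]) (simp add: num_covered_def)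
  finally show ?thesis .
qed

lemma level_antimono: "k \<le> k' \<Longrightarrow> level n k' \<le> level n k"
  unfolding level_def by (intro mult_left_mono harm_mono) auto

lemma level_Suc: "k < n \<Longrightarrow> level n k = level n (Suc k) + 2 * real n / real (n - k)"
proof -
  assume "k < n"
  then obtain j where "n - k = Suc j" "n - Suc k = j" by (metis Suc_diff_Suc)
  then show ?thesis unfolding level_def by (simp add: harm_Suc field_simps)
qed

lemma potential_nonneg: "0 \<le> potential n X"
  by (simp add: potential_def level_def harm_nonneg)

lemma potential_empty: "potential n None = 2 * real n * harm n"
  by (simp add: potential_def level_def num_covered_def covered_def leaflist_def)

lemma potential_le_empty: "potential n X \<le> potential n None"
  by (simp add: potential_def level_antimono num_covered_def covered_def leaflist_def)

lemma potential_full: "num_covered n X = n \<Longrightarrow> potential n X = 0"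
  by (simp add: potential_def level_def harm_altdef)

lemma potential_le_if_covered_subset:
  "covered n Y \<subseteq> covered n X \<Longrightarrow> potential n X \<le> potential n Y"
  unfolding potential_def num_covered_def
  by (intro level_antimono card_mono) (auto simp: covered_def)

lemma potential_after_new_literal:
  assumes new: "set (leaflist Y) \<subseteq> set (leaflist X) \<union> {u}"
  shows "potential n X \<le> min (potential n Y) (potential n X)
                            + jump n X * indicator (missing n X) u"
proof (cases "u \<in> missing n X")
  case True
  then obtain j where u: "u = Pos j" and j: "j \<in> {1..n} - covered n X"
    by (auto simp: missing_def)
  have "covered n Y \<subseteq> insert j (covered n X)"
    using new u by (auto simp: covered_def)
  then have "card (covered n Y) \<le> card (insert j (covered n X))"
    by (intro card_mono) (auto simp: covered_def)
  then have le_Suc: "num_covered n Y \<le> Suc (num_covered n X)"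
    using j by (simp add: num_covered_def card_insert_disjoint[OF finite_covered])
  have "covered n X \<subset> {1..n}" using j covered_subset by blast
  then have lt: "num_covered n X < n"
    using psubset_card_mono[of "{1..n}" "covered n X"] by (simp add: num_covered_def)
  have drop: "potential n X = level n (Suc (num_covered n X)) + jump n X"
    using level_Suc[OF lt] lt by (simp add: potential_def jump_def)
  have "level n (Suc (num_covered n X)) \<le> potential n Y"
    unfolding potential_def by (rule level_antimono[OF le_Suc])
  moreover have "0 \<le> jump n X" by (simp add: jump_def)
  ultimately show ?thesis using True drop by simp
next
  case False
  have "covered n Y \<subseteq> covered n X"
    using new False by (auto simp: covered_def missing_def)
  then show ?thesis using False potential_le_if_covered_subset by (simp add: min_absorb2)
qed

section \<open>The expected decrease of the potential is at most one\<close>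

text \<open>A distribution p of offspring of X has drift at most one if the expected value of
  min(potential of the offspring, potential of X) is at least the potential of X minus 1.
  The minimum accounts for selection: the next tree is either the offspring or X itself,
  so its potential is at least the minimum of the two.\<close>
definition drift_le_one :: "nat \<Rightarrow> tree option \<Rightarrow> tree option pmf \<Rightarrow> bool" where
  "drift_le_one n X p \<longleftrightarrow>
     ennreal (potential n X) \<le> (\<integral>\<^sup>+Y. ennreal (min (potential n Y) (potential n X)) \<partial>p) + 1"

lemma nn_integral_pmf_add_const:
  "(\<integral>\<^sup>+y. f y + ennreal c \<partial>measure_pmf p) = (\<integral>\<^sup>+y. f y \<partial>p) + ennreal c"
  by (subst nn_integral_add) (auto simp: measure_pmf.emeasure_space_1)

lemma drift_le_one_no_new_literal:
  assumes "\<forall>Y\<in>set_pmf p. set (leaflist Y) \<subseteq> set (leaflist X)"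
  shows "drift_le_one n X p"
proof -
  have "min (potential n Y) (potential n X) = potential n X" if "Y \<in> set_pmf p" for Y
  proof -
    have "covered n Y \<subseteq> covered n X" using assms that by (auto simp: covered_def)
    then show ?thesis by (simp add: potential_le_if_covered_subset min_absorb2)
  qed
  then have "(\<integral>\<^sup>+Y. ennreal (min (potential n Y) (potential n X)) \<partial>p)
               = (\<integral>\<^sup>+Y. ennreal (potential n X) \<partial>p)"
    by (intro nn_integral_cong_AE) (simp add: AE_measure_pmf_iff)
  then have "(\<integral>\<^sup>+Y. ennreal (min (potential n Y) (potential n X)) \<partial>p) = ennreal (potential n X)"
    by (simp add: measure_pmf.emeasure_space_1)
  then show ?thesis unfolding drift_le_one_def by simp
qed

lemma drift_le_one_bind:
  assumes "\<forall>x\<in>set_pmf p. drift_le_one n X (f x)"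
  shows "drift_le_one n X (bind_pmf p f)"
proof -
  have "(\<integral>\<^sup>+x. ennreal (potential n X) \<partial>p)
          \<le> (\<integral>\<^sup>+x. (\<integral>\<^sup>+Y. ennreal (min (potential n Y) (potential n X)) \<partial>f x) + ennreal 1 \<partial>p)"
    using assms unfolding drift_le_one_def
    by (intro nn_integral_mono_AE) (simp add: AE_measure_pmf_iff)
  then show ?thesis
    unfolding drift_le_one_def nn_integral_pmf_add_const nn_integral_bind_pmf
    by (simp add: measure_pmf.emeasure_space_1)
qed

lemma card_lits: "card (lits n) = 2 * n"
proof -
  have "card (lits n) = card (Pos ` {1..n}) + card (Neg ` {1..n})"
    unfolding lits_def by (rule card_Un_disjoint) auto
  also have "\<dots> = 2 * n" by (simp add: card_image inj_on_def)
  finally show ?thesis .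
qed

text \<open>A uniformly random literal is missing with probability (n - k)/(2n), so the
  expected jump it causes is exactly 1 (or 0 if nothing is missing).\<close>
lemma expected_jump_le_one:
  assumes n: "n \<ge> 1"
  shows "(\<integral>\<^sup>+u. ennreal (jump n X * indicator (missing n X) u) \<partial>pmf_of_set (lits n)) \<le> 1"
proof -
  have ne: "lits n \<noteq> {}" using n by (auto simp: lits_def)
  have fin: "finite (lits n)" by (simp add: lits_def)
  have sub: "missing n X \<subseteq> lits n" by (auto simp: missing_def lits_def)
  have jump_nonneg: "0 \<le> jump n X" by (simp add: jump_def)
  have "(\<integral>\<^sup>+u. ennreal (jump n X * indicator (missing n X) u) \<partial>pmf_of_set (lits n))
        = ennreal (jump n X) * emeasure (measure_pmf (pmf_of_set (lits n))) (missing n X)"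
    using jump_nonneg
    by (subst nn_integral_cmult_indicator[symmetric])
       (auto simp: ennreal_mult' ennreal_indicator intro!: nn_integral_cong)
  also have "\<dots> = ennreal (jump n X * real (card (missing n X)) / real (card (lits n)))"
    using ne fin sub jump_nonneg
    by (simp add: emeasure_pmf_of_set Int_absorb1 ennreal_of_nat_eq_real_of_nat
                  divide_ennreal ennreal_mult'[symmetric])
  also have "\<dots> \<le> 1"
    using num_covered_le[of n X] n
    unfolding card_missing card_lits jump_def by (auto simp: of_nat_diff intro!: ennreal_leI)
  finally show ?thesis .
qed

lemma drift_le_one_random_literal:
  assumes n: "n \<ge> 1"
    and new: "\<And>u Y. u \<in> lits n \<Longrightarrow> Y \<in> set_pmf (k u)
                    \<Longrightarrow> set (leaflist Y) \<subseteq> set (leaflist X) \<union> {u}"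
  shows "drift_le_one n X (bind_pmf (pmf_of_set (lits n)) k)"
proof -
  let ?m = "\<lambda>Y. ennreal (min (potential n Y) (potential n X))"
  let ?J = "\<lambda>u. ennreal (jump n X * indicator (missing n X) u)"
  have ne: "lits n \<noteq> {}" using n by (auto simp: lits_def)
  have fin: "finite (lits n)" by (simp add: lits_def)
  have pointwise: "ennreal (potential n X) \<le> (\<integral>\<^sup>+Y. ?m Y \<partial>k u) + ?J u"
    if u: "u \<in> lits n" for u
  proof -
    have "(\<integral>\<^sup>+Y. ennreal (potential n X) \<partial>k u) \<le> (\<integral>\<^sup>+Y. ?m Y + ?J u \<partial>k u)"
    proof (intro nn_integral_mono_AE, unfold AE_measure_pmf_iff, intro ballI)
      fix Y assume "Y \<in> set_pmf (k u)"
      then have "potential n X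
                   \<le> min (potential n Y) (potential n X) + jump n X * indicator (missing n X) u"
        using new u potential_after_new_literal by blast
      then show "ennreal (potential n X) \<le> ?m Y + ?J u"
        by (simp add: jump_def potential_nonneg ennreal_plus[symmetric] ennreal_leI
                 del: ennreal_plus)
    qed
    then show ?thesis
      unfolding nn_integral_pmf_add_const by (simp add: measure_pmf.emeasure_space_1)
  qed
  have "ennreal (potential n X) = (\<integral>\<^sup>+u. ennreal (potential n X) \<partial>pmf_of_set (lits n))"
    by (simp add: measure_pmf.emeasure_space_1)
  also have "\<dots> \<le> (\<integral>\<^sup>+u. (\<integral>\<^sup>+Y. ?m Y \<partial>k u) + ?J u \<partial>pmf_of_set (lits n))"
    using pointwise ne fin by (intro nn_integral_mono_AE) (simp add: AE_measure_pmf_iff)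
  also have "\<dots> = (\<integral>\<^sup>+u. (\<integral>\<^sup>+Y. ?m Y \<partial>k u) \<partial>pmf_of_set (lits n))
                 + (\<integral>\<^sup>+u. ?J u \<partial>pmf_of_set (lits n))"
    by (rule nn_integral_add) auto
  also have "\<dots> \<le> (\<integral>\<^sup>+u. (\<integral>\<^sup>+Y. ?m Y \<partial>k u) \<partial>pmf_of_set (lits n)) + 1"
    using expected_jump_le_one[OF n] by (rule add_left_mono)
  finally show ?thesis unfolding drift_le_one_def nn_integral_bind_pmf .
qed

lemma drift_le_one_hvl_prime:
  assumes n: "n \<ge> 1"
  shows "drift_le_one n X (hvl_prime n X)"
proof -
  have subst: "drift_le_one n X (substitute n X)"
  proof (cases X)
    case (Some t)
    show ?thesis unfolding substitute_def Some option.case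
    proof (rule drift_le_one_bind, rule ballI, rule drift_le_one_random_literal[OF n])
    qed (auto simp: leaflist_def dest!: set_leaves_subst_leaf[THEN subsetD])
  qed (auto simp: substitute_def intro!: drift_le_one_no_new_literal)
  have ins: "drift_le_one n X (insertion n X)"
  proof (cases X)
    case None
    show ?thesis unfolding insertion_def None option.case
      by (intro drift_le_one_random_literal[OF n]) (auto simp: leaflist_def)
  next
    case (Some t)
    show ?thesis unfolding insertion_def Some option.case
    proof (rule drift_le_one_bind, rule ballI, rule drift_le_one_random_literal[OF n])
    qed (auto simp: leaflist_def dest!: set_leaves_insert_at[THEN subsetD])
  qed
  have del: "drift_le_one n X (deletion X)"
  proof (cases X)
    case (Some t)
    have "0 < nleaves t" by (induction t) auto
    then show ?thesis unfolding deletion_def Some option.case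
      by (auto intro!: drift_le_one_bind drift_le_one_no_new_literal
               dest: set_leaflist_delete_leaf[THEN subsetD])
  qed (auto simp: deletion_def intro!: drift_le_one_no_new_literal)
  show ?thesis unfolding hvl_prime_def
    using subst ins del by (intro drift_le_one_bind) auto
qed

text \<open>Whatever the fitness F, one iteration of the (1+1) GP-single decreases the
  potential by at most one in expectation: the new tree is either the offspring or X.\<close>
lemma gp_step_drift:
  assumes n: "n \<ge> 1"
  shows "ennreal (potential n X) \<le> (\<integral>\<^sup>+Y. ennreal (potential n Y) \<partial>gp_step n F X) + 1"
proof -
  have "ennreal (potential n X)
          \<le> (\<integral>\<^sup>+Y. ennreal (min (potential n Y) (potential n X)) \<partial>hvl_prime n X) + 1"
    using drift_le_one_hvl_prime[OF n] unfolding drift_le_one_def .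
  also have "(\<integral>\<^sup>+Y. ennreal (min (potential n Y) (potential n X)) \<partial>hvl_prime n X)
               \<le> (\<integral>\<^sup>+Y. ennreal (potential n Y) \<partial>gp_step n F X)"
    unfolding gp_step_def nn_integral_map_pmf
    by (intro nn_integral_mono) (auto intro!: ennreal_leI)
  finally show ?thesis by (simp add: add_right_mono)
qed

section \<open>ORDER and MAJORITY\<close>

text \<open>The tree with leaf list x_1, ..., x_n, a witness for fitness value n.\<close>
fun comb :: "lit \<Rightarrow> lit list \<Rightarrow> tree" where
  "comb a [] = Lf a"
| "comb a (b # l) = J (Lf a) (comb b l)"

lemma leaves_comb: "leaves (comb a l) = a # l"
  by (induction a l rule: comb.induct) auto

definition all_positive :: "nat \<Rightarrow> tree option" where
  "all_positive n = Some (comb (Pos 1) (map Pos [2..<n+1]))"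

lemma leaflist_all_positive: "n \<ge> 1 \<Longrightarrow> leaflist (all_positive n) = map Pos [1..<n+1]"
proof -
  assume "n \<ge> 1"
  then have "[1..<n+1] = 1 # [2..<n+1]"
    by (simp add: upt_conv_Cons numeral_2_eq_2 del: upt_Suc)
  then show ?thesis by (simp add: all_positive_def leaflist_def leaves_comb del: upt_Suc)
qed

lemma valid_all_positive: "n \<ge> 1 \<Longrightarrow> valid_tree n (all_positive n)"
  unfolding valid_tree_def leaflist_all_positive by (auto simp: lits_def)

text \<open>Both fitness functions only reward variables whose positive literal occurs.\<close>
lemma sum_indicator_card:
  "finite A \<Longrightarrow> (\<Sum>i\<in>A. if P i then (1::real) else 0) = real (card {i\<in>A. P i})"
  by (simp add: sum.If_cases Int_def conj_commute)

lemma set_order_scan: "set (order_scan S l) \<subseteq> set S \<union> set l"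
  by (induction S l rule: order_scan.induct) auto

lemma order_scan_keeps: "set S \<subseteq> set (order_scan S l)"
  by (induction S l rule: order_scan.induct) auto

lemma order_scan_complete:
  "a \<in> set l \<Longrightarrow> a \<in> set (order_scan S l) \<or> compl a \<in> set (order_scan S l)"
proof (induction S l rule: order_scan.induct)
  case (2 S b l)
  then show ?case
    using order_scan_keeps[of "if b \<in> set S \<or> compl b \<in> set S then S else S @ [b]" l]
    by (cases "a = b") (auto split: if_splits)
qed simp

lemma ORDER_le_num_covered: "ORDER n X \<le> real (num_covered n X)"
proof -
  have "ORDER n X \<le> (\<Sum>i\<in>{1..n}. if Pos i \<in> set (leaflist X) then (1::real) else 0)"
    unfolding ORDER_def worder_def using set_order_scan[of "[]" "leaflist X"]
    by (intro sum_mono) auto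
  then show ?thesis by (simp add: sum_indicator_card num_covered_def covered_def)
qed

lemma MAJORITY_le_num_covered: "MAJORITY n X \<le> real (num_covered n X)"
proof -
  have "MAJORITY n X \<le> (\<Sum>i\<in>{1..n}. if Pos i \<in> set (leaflist X) then (1::real) else 0)"
    unfolding MAJORITY_def wmajority_def
    by (intro sum_mono) (auto simp: count_list_0_iff[symmetric])
  then show ?thesis by (simp add: sum_indicator_card num_covered_def covered_def)
qed

lemma ORDER_all_positive: "n \<ge> 1 \<Longrightarrow> ORDER n (all_positive n) = real n"
proof -
  assume n: "n \<ge> 1"
  let ?S = "order_scan [] (leaflist (all_positive n))"
  have "Pos i \<in> set ?S" if i: "i \<in> {1..n}" for i
  proof -
    have "Pos i \<in> set (leaflist (all_positive n))" using i n by (auto simp: leaflist_all_positive)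
    from order_scan_complete[OF this, of "[]"] set_order_scan[of "[]" "leaflist (all_positive n)"] n
    show ?thesis by (auto simp: leaflist_all_positive)
  qed
  then show ?thesis unfolding ORDER_def worder_def by simp
qed

lemma MAJORITY_all_positive: "n \<ge> 1 \<Longrightarrow> MAJORITY n (all_positive n) = real n"
proof -
  assume n: "n \<ge> 1"
  have "count_list (leaflist (all_positive n)) (Pos i) \<ge> 1 \<and>
        count_list (leaflist (all_positive n)) (Neg i) = 0" if i: "i \<in> {1..n}" for i
  proof -
    have "Pos i \<in> set (leaflist (all_positive n))" using i n by (auto simp: leaflist_all_positive)
    moreover have "Neg i \<notin> set (leaflist (all_positive n))" using n by (auto simp: leaflist_all_positive)
    ultimately show ?thesis by (metis count_list_0_iff less_one not_le)
  qed
  then show ?thesis unfolding MAJORITY_def wmajority_def by simp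
qed

lemma expected_opt_time_lower_bound:
  assumes n: "n \<ge> 1" and F_le: "\<And>X. F X \<le> real (num_covered n X)"
    and F_witness: "F (all_positive n) = real n"
  shows "ennreal (real n * ln (real n)) \<le> expected_opt_time n F None"
proof -
  have optimal_potential: "potential n X = 0" if "optimal n F X" for X
  proof -
    have "real n \<le> F X"
      using that valid_all_positive[OF n] F_witness unfolding optimal_def by metis
    then show ?thesis
      using F_le[of X] num_covered_le[of n X] potential_full by (simp add: le_antisym)
  qed
  have "ennreal (potential n None) \<le> expected_opt_time n F None"
    unfolding expected_opt_time_def
    using potential_nonneg optimal_potential potential_le_empty gp_step_drift[OF n]
    by (rule additive_drift_lower_bound)
  moreover have "real n * ln (real n) \<le> potential n None"
  proof -
    have "ln (real n) \<le> ln (real n + 1)" using n by simp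
    also have "\<dots> \<le> harm n" by (rule ln_le_harm)
    finally have "ln (real n) \<le> harm n" .
    moreover have "0 \<le> (harm n :: real)" by (rule harm_nonneg)
    ultimately have "ln (real n) \<le> 2 * harm n" by linarith
    then have "real n * ln (real n) \<le> real n * (2 * harm n)" by (intro mult_left_mono) auto
    then show ?thesis by (simp add: potential_empty)
  qed
  ultimately show ?thesis by (meson ennreal_leI order.trans)
qed

theorem theorem1:
  shows "\<exists>c>0. \<exists>N. \<forall>n\<ge>N.
           ennreal (c * real n * ln (real n)) \<le> expected_opt_time n (ORDER n) None \<and>
           ennreal (c * real n * ln (real n)) \<le> expected_opt_time n (MAJORITY n) None"
proof (intro exI[of _ 1] conjI exI[of _ 1] allI impI)
  fix n :: nat assume n: "1 \<le> n"
  show "ennreal (1 * real n * ln (real n)) \<le> expected_opt_time n (ORDER n) None"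
    using expected_opt_time_lower_bound[OF n ORDER_le_num_covered ORDER_all_positive[OF n]]
    by simp
  show "ennreal (1 * real n * ln (real n)) \<le> expected_opt_time n (MAJORITY n) None"
    using expected_opt_time_lower_bound[OF n MAJORITY_le_num_covered MAJORITY_all_positive[OF n]]
    by simp
qed simp

end
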